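(* Let $T>0$ and $0<\tau_0\leq T$. Let $\mu\colon[0,\tau_0]\to[0,+\infty[$ be a modulus of continuity, i.e. a continuous, concave, strictly increasing function with $\mu(0)=0$. Let $\nu\colon\,]0,T]\to\,]0,+\infty[$ be a non-decreasing continuous function such that for some $\kappa>0$, $$\nu(t/2)\geq\kappa\,\nu(t)\quad\text{for all } t\in\,]0,T].$$ Let $a\colon[0,T]\to\mathbb R$ be a bounded function for which there is a constant $C>0$ with $$|a(t+\tau)-a(t)|\leq \frac{C}{\nu(t)}\mu(\tau)\quad\text{whenever } 0\leq\tau\leq\tau_0,\ t,t+\tau\in\,]0,T].$$ Let $\rho\in C^\infty(\mathbb R)$ with $\operatorname{supp}\rho\subset[-1,1]$, $\rho\geq0$, $\int_{\mathbb R}\rho(s)\,ds=1$, and set $\rho_\epsilon(s)=\frac1\epsilon\rho(s/\epsilon)$. For $0<\epsilon\leq\tau_0$ define $$\tilde a_\epsilon(t)=\begin{cases}a(\epsilon)& t\leq\epsilon,\\ a(t)&\epsilon\leq t\leq T,\\ a(T)& T\leq t,\end{cases}\qquad a_\epsilon(t)=\int_{-\epsilon}^{\epsilon}\rho_\epsilon(s)\tilde a_\epsilon(t-s)\,ds,\quad t\in\mathbb R.$$ Then there exist constants $C',C''>0$, depending only on $C$, $\rho$, $\kappa$ and $\|a\|_\infty$, such that for all $0<\epsilon\leq\tau_0$ and all $t\in\,]0,T]$, $$|a_\epsilon(t)-\tilde a_\epsilon(t)|\leq C'\min\Big\{1,\frac{\mu(\epsilon)}{\nu(t)}\Big\}\quad\text{and}\quad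 |a_\epsilon'(t)|\leq \frac{C''}{\epsilon}\min\Big\{1,\frac{\mu(\epsilon)}{\nu(t)}\Big\}.$$ *)

theory Defs
  imports "HOL-Analysis.Analysis"
begin

definition smooth_real :: "(real \<Rightarrow> real) \<Rightarrow> bool" where
  "smooth_real f \<longleftrightarrow> (\<exists>D :: nat \<Rightarrow> real \<Rightarrow> real. D 0 = f \<and>
      (\<forall>n x. (D n has_real_derivative D (Suc n) x) (at x)))"

definition a_tilde :: "(real \<Rightarrow> real) \<Rightarrow> real \<Rightarrow> real \<Rightarrow> real \<Rightarrow> real" where
  "a_tilde a T eps t = (if t \<le> eps then a eps else if t \<le> T then a t else a T)"

definition a_moll :: "(real \<Rightarrow> real) \<Rightarrow> (real \<Rightarrow> real) \<Rightarrow> real \<Rightarrow> real \<Rightarrow> real \<Rightarrow> real" where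
  "a_moll \<rho> a T eps t = integral {-eps..eps} (\<lambda>s. (1/eps) * \<rho> (s/eps) * a_tilde a T eps (t - s))"

end

theory Submission
  imports Defs
begin

(* For t in ]0,T] and |s| <= eps, the clamped points t - s and t both lie in [max eps (t/2), T]
   at distance at most eps. The modulus hypothesis together with nu (t/2) >= kappa nu t bounds
   the increment of a_tilde between them by (C/kappa) mu eps / nu t, and boundedness of a bounds
   it by 2 M. Averaging this increment bound against rho_eps gives the first estimate. For the
   derivative, differentiate under the integral and subtract a_tilde t times the integral of
   rho_eps', which vanishes; the same increment bound is then averaged against
   |rho_eps'| <= sup |rho'| / eps^2 over a window of length O(eps), which costs a factor 1/eps. *)

locale mollifier_kernel =
  fixes \<rho> \<rho>' :: "real \<Rightarrow> real"
  assumes has_derivative: "\<And>x. (\<rho> has_real_derivative \<rho>' x) (at x)"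
    and continuous_derivative: "continuous_on UNIV \<rho>'"
    and vanishes_outside: "\<And>s. \<bar>s\<bar> > 1 \<Longrightarrow> \<rho> s = 0"
    and nonneg: "\<And>s. \<rho> s \<ge> 0"
    and has_integral_one: "(\<rho> has_integral 1) UNIV"
begin

definition scaled :: "real \<Rightarrow> real \<Rightarrow> real" where
  "scaled \<epsilon> s = 1/\<epsilon> * \<rho> (s/\<epsilon>)"

definition mollify :: "real \<Rightarrow> (real \<Rightarrow> real) \<Rightarrow> real \<Rightarrow> real" where
  "mollify \<epsilon> g t = integral {-\<epsilon>..\<epsilon>} (\<lambda>s. scaled \<epsilon> s * g (t - s))"

lemma continuous: "continuous_on UNIV \<rho>"
  using has_derivative by (meson DERIV_isCont continuous_at_imp_continuous_on)

lemma continuous_on_scaled: "continuous_on S (scaled \<epsilon>)"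
  unfolding scaled_def divide_inverse by (intro continuous_intros continuous_on_compose2[OF continuous]) auto

lemma derivative_vanishes_outside:
  assumes "\<bar>s\<bar> > 1"
  shows "\<rho>' s = 0"
proof -
  define S where "S = (if s > 1 then {1<..} else {..<-1::real})"
  have S: "open S" "s \<in> S" using assms by (auto simp: S_def)
  have "\<And>x. x \<in> S \<Longrightarrow> 0 = \<rho> x" using vanishes_outside by (auto simp: S_def split: if_splits)
  with DERIV_const[of 0 "at s"] have "(\<rho> has_real_derivative 0) (at s)"
    by (rule has_field_derivative_transform_within_open[OF _ S])
  then show ?thesis using has_derivative DERIV_unique by blast
qed

lemma derivative_bounded:
  obtains B where "B > 0" and "\<And>s. \<bar>\<rho>' s\<bar> \<le> B"
proof -
  have "bounded (\<rho>' ` {-1..1})"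
    by (intro compact_imp_bounded compact_continuous_image
        continuous_on_subset[OF continuous_derivative]) auto
  then obtain B where "\<forall>y\<in>\<rho>' ` {-1..1}. norm y \<le> B"
    by (auto simp: bounded_iff)
  then have B: "\<bar>\<rho>' s\<bar> \<le> B" if "\<bar>s\<bar> \<le> 1" for s
    using that by (auto simp: abs_le_iff)
  have "\<bar>\<rho>' s\<bar> \<le> \<bar>B\<bar> + 1" for s
    using B[of s] derivative_vanishes_outside[of s] by fastforce
  with that[of "\<bar>B\<bar> + 1"] show thesis by simp
qed

lemma scaled_has_integral_one:
  assumes "\<epsilon> > 0"
  shows "(scaled \<epsilon> has_integral 1) {-\<epsilon>..\<epsilon>}"
proof -
  have "(\<lambda>x. if x \<in> cbox (-1) 1 then \<rho> x else 0) = \<rho>"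
    using vanishes_outside by (auto simp: fun_eq_iff abs_real_def)
  then have "(\<rho> has_integral 1) (cbox (-1) 1)"
    using has_integral_one has_integral_restrict[of "cbox (-1) 1" UNIV \<rho> 1] by simp
  from has_integral_affinity'[OF this, of "1/\<epsilon>" 0]
  have "((\<lambda>x. \<rho> (x/\<epsilon>)) has_integral \<epsilon>) {-\<epsilon>..\<epsilon>}"
    using assms by (simp add: divide_inverse mult.commute)
  from has_integral_mult_right[OF this, of "1/\<epsilon>"] show ?thesis
    using assms by (simp add: scaled_def[abs_def])
qed

lemma mollify_dist_le:
  assumes "\<epsilon> > 0" and "continuous_on UNIV g"
    and increment: "\<And>s. \<bar>s\<bar> \<le> \<epsilon> \<Longrightarrow> \<bar>g (t - s) - g t\<bar> \<le> K"
  shows "\<bar>mollify \<epsilon> g t - g t\<bar> \<le> K"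
proof -
  have "(\<lambda>s. scaled \<epsilon> s * g (t - s)) integrable_on {-\<epsilon>..\<epsilon>}"
    by (intro integrable_continuous_real continuous_intros continuous_on_scaled
        continuous_on_compose2[OF assms(2)]) auto
  from has_integral_diff[OF integrable_integral[OF this]
      has_integral_mult_left[OF scaled_has_integral_one[OF assms(1)], of "g t"]]
  have diff: "((\<lambda>s. scaled \<epsilon> s * (g (t - s) - g t)) has_integral (mollify \<epsilon> g t - g t)) {-\<epsilon>..\<epsilon>}"
    by (simp add: mollify_def algebra_simps)
  have bound: "((\<lambda>s. scaled \<epsilon> s * K) has_integral K) {-\<epsilon>..\<epsilon>}"
    using has_integral_mult_left[OF scaled_has_integral_one[OF assms(1)], of K] by simp
  have "norm (integral {-\<epsilon>..\<epsilon>} (\<lambda>s. scaled \<epsilon> s * (g (t - s) - g t)))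
        \<le> integral {-\<epsilon>..\<epsilon>} (\<lambda>s. scaled \<epsilon> s * K)"
  proof (rule integral_norm_bound_integral)
    show "(\<lambda>s. scaled \<epsilon> s * (g (t - s) - g t)) integrable_on {-\<epsilon>..\<epsilon>}"
      using diff by (rule has_integral_integrable)
    show "(\<lambda>s. scaled \<epsilon> s * K) integrable_on {-\<epsilon>..\<epsilon>}"
      using bound by (rule has_integral_integrable)
    fix s assume "s \<in> {-\<epsilon>..\<epsilon>}"
    then have "\<bar>g (t - s) - g t\<bar> \<le> K" by (intro increment) auto
    moreover have "scaled \<epsilon> s \<ge> 0" using nonneg assms(1) by (simp add: scaled_def)
    ultimately show "norm (scaled \<epsilon> s * (g (t - s) - g t)) \<le> scaled \<epsilon> s * K"
      by (simp add: abs_mult mult_left_mono)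
  qed
  then show ?thesis
    unfolding integral_unique[OF diff] integral_unique[OF bound] by simp
qed

lemma mollify_eq_integral:
  assumes "\<epsilon> > 0" and "continuous_on UNIV g" and "{x - \<epsilon>..x + \<epsilon>} \<subseteq> {lo..hi}"
  shows "mollify \<epsilon> g x = integral {lo..hi} (\<lambda>r. scaled \<epsilon> (x - r) * g r)"
proof -
  define k where "k = (\<lambda>r. scaled \<epsilon> (x - r) * g r)"
  have "continuous_on UNIV k"
    unfolding k_def by (intro continuous_intros continuous_on_compose2[OF continuous_on_scaled]
        continuous_on_subset[OF assms(2)]) auto
  then have k: "(k has_integral integral {x - \<epsilon>..x + \<epsilon>} k) {x - \<epsilon>..x + \<epsilon>}"
    by (intro integrable_integral integrable_continuous_real) (rule continuous_on_subset, auto)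
  from has_integral_affinity'[of k _ "x - \<epsilon>" "x + \<epsilon>" 1 x] k
  have "((\<lambda>y. k (y + x)) has_integral integral {x - \<epsilon>..x + \<epsilon>} k) {-\<epsilon>..\<epsilon>}" by simp
  then have "((\<lambda>s. k (x - s)) has_integral integral {x - \<epsilon>..x + \<epsilon>} k) {-\<epsilon>..\<epsilon>}"
    using has_integral_reflect_real[where f="\<lambda>y. k (y + x)" and a="-\<epsilon>" and b=\<epsilon>]
    by (simp add: algebra_simps)
  then have "mollify \<epsilon> g x = integral {x - \<epsilon>..x + \<epsilon>} k"
    unfolding mollify_def k_def by (simp add: integral_unique)
  also have "\<dots> = integral {lo..hi} k"
  proof (rule sym, rule integral_unique[OF has_integral_on_superset[OF k _ assms(3)]])
    fix r assume "r \<notin> {x - \<epsilon>..x + \<epsilon>}"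
    then have "\<bar>(x - r)/\<epsilon>\<bar> > 1" using assms(1) by (auto simp: abs_real_def divide_simps)
    then show "k r = 0" using vanishes_outside by (simp add: k_def scaled_def)
  qed
  finally show ?thesis by (simp add: k_def)
qed

lemma derivative_kernel_has_integral_zero:
  assumes "\<epsilon> > 0" and "lo < t - \<epsilon>" and "t + \<epsilon> < hi"
  shows "((\<lambda>r. \<rho>' ((t - r)/\<epsilon>) / \<epsilon>\<^sup>2) has_integral 0) {lo..hi}"
proof -
  define G where "G r = - scaled \<epsilon> (t - r)" for r
  have "((\<lambda>r. \<rho>' ((t - r)/\<epsilon>) / \<epsilon>\<^sup>2) has_integral G hi - G lo) {lo..hi}"
  proof (rule fundamental_theorem_of_calculus)
    fix r
    have "((\<lambda>r. (t - r)/\<epsilon>) has_real_derivative -1/\<epsilon>) (at r)"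
      using assms(1) by (auto intro!: derivative_eq_intros)
    from DERIV_chain2[OF has_derivative this]
    have "(G has_real_derivative \<rho>' ((t - r)/\<epsilon>) / \<epsilon>\<^sup>2) (at r)"
      unfolding G_def scaled_def using assms(1)
      by (auto intro!: derivative_eq_intros simp: power2_eq_square)
    then show "(G has_vector_derivative \<rho>' ((t - r)/\<epsilon>) / \<epsilon>\<^sup>2) (at r within {lo..hi})"
      by (simp add: has_real_derivative_iff_has_vector_derivative has_vector_derivative_at_within)
  qed (use assms in auto)
  moreover have "G hi = 0" "G lo = 0"
    using assms vanishes_outside by (auto simp: G_def scaled_def abs_real_def divide_simps)
  ultimately show ?thesis by simp
qed

lemma mollify_has_derivative:
  assumes "\<epsilon> > 0" and "continuous_on UNIV g"
  shows "(mollify \<epsilon> g has_real_derivative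
           integral {t - 2*\<epsilon>..t + 2*\<epsilon>} (\<lambda>r. \<rho>' ((t - r)/\<epsilon>) / \<epsilon>\<^sup>2 * g r)) (at t)"
proof -
  define f where "f = (\<lambda>x r. scaled \<epsilon> (x - r) * g r)"
  define f' where "f' = (\<lambda>x r. \<rho>' ((x - r)/\<epsilon>) / \<epsilon>\<^sup>2 * g r)"
  have "((\<lambda>x. f x r) has_real_derivative f' x r) (at x within ball t \<epsilon>)" for x r
  proof -
    have "((\<lambda>x. (x - r)/\<epsilon>) has_real_derivative 1/\<epsilon>) (at x)"
      using assms(1) by (auto intro!: derivative_eq_intros)
    from DERIV_chain2[OF has_derivative this]
    have "((\<lambda>x. f x r) has_real_derivative f' x r) (at x)"
      unfolding f_def f'_def scaled_def using assms(1)
      by (auto intro!: derivative_eq_intros simp: power2_eq_square)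
    then show ?thesis by (rule has_field_derivative_at_within)
  qed
  \<comment> \<open>The box [t - 2 eps, t + 2 eps] contains the support of f x for every x in ball t eps,
    so the Leibniz rule can be applied on a box that does not move with x.\<close>
  moreover have "f x integrable_on cbox (t - 2*\<epsilon>) (t + 2*\<epsilon>)" for x
    unfolding f_def
    by (intro integrable_continuous continuous_intros continuous_on_compose2[OF continuous_on_scaled]
        continuous_on_subset[OF assms(2)]) auto
  moreover have "continuous_on (ball t \<epsilon> \<times> cbox (t - 2*\<epsilon>) (t + 2*\<epsilon>)) (\<lambda>(x, r). f' x r)"
    unfolding f'_def split_beta
    by (intro continuous_intros continuous_on_compose2[OF continuous_derivative]
        continuous_on_compose2[OF assms(2)]) auto
  ultimately have "((\<lambda>x. integral (cbox (t - 2*\<epsilon>) (t + 2*\<epsilon>)) (f x)) has_real_derivative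
      integral (cbox (t - 2*\<epsilon>) (t + 2*\<epsilon>)) (f' t)) (at t within ball t \<epsilon>)"
    using assms(1) by (intro leibniz_rule_field_derivative) auto
  then have deriv: "((\<lambda>x. integral {t - 2*\<epsilon>..t + 2*\<epsilon>} (f x)) has_real_derivative
      integral {t - 2*\<epsilon>..t + 2*\<epsilon>} (\<lambda>r. \<rho>' ((t - r)/\<epsilon>) / \<epsilon>\<^sup>2 * g r)) (at t)"
    using at_within_open[of t "ball t \<epsilon>"] assms(1) by (simp add: f'_def)
  show ?thesis
  proof (rule has_field_derivative_transform_within_open[OF deriv, of "ball t \<epsilon>"])
    fix x assume "x \<in> ball t \<epsilon>"
    then have "{x - \<epsilon>..x + \<epsilon>} \<subseteq> {t - 2*\<epsilon>..t + 2*\<epsilon>}" by (auto simp: dist_real_def)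
    from mollify_eq_integral[OF assms this]
    show "integral {t - 2*\<epsilon>..t + 2*\<epsilon>} (f x) = mollify \<epsilon> g x" by (simp add: f_def)
  qed (use assms(1) in auto)
qed

lemma mollify_derivative_bound:
  assumes "\<epsilon> > 0" and "continuous_on UNIV g" and derivative_le: "\<And>s. \<bar>\<rho>' s\<bar> \<le> B"
    and increment: "\<And>s. \<bar>s\<bar> \<le> \<epsilon> \<Longrightarrow> \<bar>g (t - s) - g t\<bar> \<le> K"
  shows "\<exists>D. (mollify \<epsilon> g has_real_derivative D) (at t) \<and> \<bar>D\<bar> \<le> 4 * B * K / \<epsilon>"
proof (intro exI conjI)
  define h where "h = (\<lambda>r. \<rho>' ((t - r)/\<epsilon>) / \<epsilon>\<^sup>2)"
  define D where "D = integral {t - 2*\<epsilon>..t + 2*\<epsilon>} (\<lambda>r. h r * g r)"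
  show "(mollify \<epsilon> g has_real_derivative D) (at t)"
    unfolding D_def h_def by (rule mollify_has_derivative[OF assms(1,2)])
  have integrable: "(\<lambda>r. h r * g r) integrable_on {t - 2*\<epsilon>..t + 2*\<epsilon>}"
    unfolding h_def
    by (intro integrable_continuous_real continuous_intros continuous_on_compose2[OF continuous_derivative]
        continuous_on_subset[OF assms(2)]) (use assms(1) in auto)
  have "(h has_integral 0) {t - 2*\<epsilon>..t + 2*\<epsilon>}"
    unfolding h_def by (rule derivative_kernel_has_integral_zero) (use assms(1) in auto)
  from has_integral_diff[OF integrable_integral[OF integrable] has_integral_mult_left[OF this]]
  have D: "((\<lambda>r. h r * (g r - g t)) has_integral D) {t - 2*\<epsilon>..t + 2*\<epsilon>}"
    by (simp add: D_def right_diff_distrib)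
  have bound_nonneg: "0 \<le> B / \<epsilon>\<^sup>2 * K"
    using derivative_le[of 0] increment[of 0] assms(1) by simp
  have pointwise: "norm (h r * (g r - g t)) \<le> B / \<epsilon>\<^sup>2 * K" for r
  proof (cases "\<bar>t - r\<bar> \<le> \<epsilon>")
    case True
    have h_le: "\<bar>h r\<bar> \<le> B / \<epsilon>\<^sup>2" using derivative_le by (simp add: h_def divide_right_mono)
    moreover have "\<bar>g r - g t\<bar> \<le> K" using increment[of "t - r"] True by simp
    ultimately show ?thesis
      unfolding real_norm_def abs_mult
      by (rule mult_mono) (use order_trans[OF abs_ge_zero h_le] in auto)
  next
    case False
    then have "\<bar>(t - r)/\<epsilon>\<bar> > 1" using assms(1) by (simp add: abs_divide)
    then show ?thesis using derivative_vanishes_outside bound_nonneg by (simp add: h_def)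
  qed
  have "norm D \<le> B / \<epsilon>\<^sup>2 * K * (4 * \<epsilon>)"
    using has_integral_bound[OF bound_nonneg, where f="\<lambda>r. h r * (g r - g t)" and i=D
        and a="t - 2*\<epsilon>" and b="t + 2*\<epsilon>"] D pointwise assms(1)
    by simp
  also have "\<dots> = 4 * B * K / \<epsilon>"
    using assms(1) by (simp add: power2_eq_square field_simps)
  finally show "\<bar>D\<bar> \<le> 4 * B * K / \<epsilon>" by simp
qed

lemma a_moll_eq_mollify: "a_moll \<rho> a T \<epsilon> = mollify \<epsilon> (a_tilde a T \<epsilon>)"
  by (simp add: fun_eq_iff a_moll_def mollify_def scaled_def)

end

lemma le_max_mult_min:
  fixes x A B q :: real
  assumes "x \<le> A" and "x \<le> B * q" and "0 \<le> q"
  shows "x \<le> max A B * min 1 q"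
proof (cases "q \<le> 1")
  case True
  then show ?thesis using assms(2,3) mult_right_mono[of B "max A B" q] by simp
next
  case False
  then show ?thesis using assms(1) by simp
qed

lemma a_tilde_eq_clamp:
  assumes "\<epsilon> \<le> T"
  shows "a_tilde a T \<epsilon> x = a (max \<epsilon> (min T x))"
  using assms by (auto simp: a_tilde_def)

lemma modulus_increment_le:
  fixes a \<mu> \<nu> :: "real \<Rightarrow> real"
  assumes modulus: "\<forall>t \<tau>. 0 \<le> \<tau> \<and> \<tau> \<le> \<tau>0 \<and> t \<in> {0<..T} \<and> t + \<tau> \<in> {0<..T} \<longrightarrow>
      \<bar>a (t + \<tau>) - a t\<bar> \<le> C / \<nu> t * \<mu> \<tau>"
    and "u \<in> {0<..T}" and "v \<in> {0<..T}" and "\<bar>u - v\<bar> \<le> \<tau>0"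
  shows "\<bar>a u - a v\<bar> \<le> C / \<nu> (min u v) * \<mu> \<bar>u - v\<bar>"
proof (cases "u \<le> v")
  case True
  then have "\<bar>a (u + (v - u)) - a u\<bar> \<le> C / \<nu> u * \<mu> (v - u)"
    using assms(2-4) by (intro modulus[rule_format]) auto
  then show ?thesis using True by (simp add: abs_minus_commute min_def)
next
  case False
  then have "\<bar>a (v + (u - v)) - a v\<bar> \<le> C / \<nu> v * \<mu> (u - v)"
    using assms(2-4) by (intro modulus[rule_format]) auto
  then show ?thesis using False by (simp add: min_def)
qed

locale weighted_modulus =
  fixes a \<mu> \<nu> :: "real \<Rightarrow> real" and C \<kappa> M T \<tau>0 \<epsilon> :: real
  assumes C_pos: "C > 0" and kappa_pos: "\<kappa> > 0"
    and eps: "0 < \<epsilon>" "\<epsilon> \<le> \<tau>0" "\<tau>0 \<le> T"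
    and mu_continuous: "continuous_on {0..\<tau>0} \<mu>" and mu_mono: "strict_mono_on {0..\<tau>0} \<mu>"
    and mu_zero: "\<mu> 0 = 0" and mu_nonneg: "\<forall>x\<in>{0..\<tau>0}. \<mu> x \<ge> 0"
    and nu_mono: "mono_on {0<..T} \<nu>" and nu_pos: "\<forall>t\<in>{0<..T}. \<nu> t > 0"
    and nu_half: "\<forall>t\<in>{0<..T}. \<nu> (t/2) \<ge> \<kappa> * \<nu> t"
    and a_bounded: "\<forall>t\<in>{0..T}. \<bar>a t\<bar> \<le> M"
    and modulus: "\<forall>t \<tau>. 0 \<le> \<tau> \<and> \<tau> \<le> \<tau>0 \<and> t \<in> {0<..T} \<and> t + \<tau> \<in> {0<..T} \<longrightarrow>
      \<bar>a (t + \<tau>) - a t\<bar> \<le> C / \<nu> t * \<mu> \<tau>"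
begin

lemma continuous_on_a: "continuous_on {\<epsilon>..T} a"
  unfolding continuous_on_iff
proof (intro ballI allI impI)
  fix x e :: real assume x: "x \<in> {\<epsilon>..T}" and "e > 0"
  define L where "L = C / \<nu> \<epsilon>"
  have "L > 0" using C_pos nu_pos eps by (simp add: L_def)
  have "0 \<in> {0..\<tau>0}" and "e / L > 0" using eps \<open>e > 0\<close> \<open>L > 0\<close> by auto
  then obtain d where "d > 0" and d: "\<forall>y\<in>{0..\<tau>0}. dist y 0 < d \<longrightarrow> dist (\<mu> y) (\<mu> 0) < e / L"
    using mu_continuous unfolding continuous_on_iff by blast
  show "\<exists>d>0. \<forall>y\<in>{\<epsilon>..T}. dist y x < d \<longrightarrow> dist (a y) (a x) < e"
  proof (intro exI[of _ "min d \<tau>0"] conjI ballI impI)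
    fix y assume y: "y \<in> {\<epsilon>..T}" and "dist y x < min d \<tau>0"
    then have close: "\<bar>y - x\<bar> < d" "\<bar>y - x\<bar> \<le> \<tau>0" by (auto simp: dist_real_def)
    have "\<bar>a y - a x\<bar> \<le> C / \<nu> (min y x) * \<mu> \<bar>y - x\<bar>"
      using modulus_increment_le[OF modulus] x y close eps by simp
    also have "\<dots> \<le> L * \<mu> \<bar>y - x\<bar>"
    proof (rule mult_right_mono)
      have "\<nu> \<epsilon> \<le> \<nu> (min y x)" using x y eps by (intro mono_onD[OF nu_mono]) auto
      then show "C / \<nu> (min y x) \<le> L" using C_pos nu_pos eps by (simp add: L_def frac_le)
    qed (use mu_nonneg close in auto)
    also have "\<dots> < L * (e / L)"
    proof (rule mult_strict_left_mono[OF _ \<open>L > 0\<close>])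
      show "\<mu> \<bar>y - x\<bar> < e / L"
        using d[rule_format, of "\<bar>y - x\<bar>"] close mu_zero by (simp add: dist_real_def abs_less_iff)
    qed
    also have "\<dots> = e" using \<open>L > 0\<close> by simp
    finally show "dist (a y) (a x) < e" by (simp add: dist_real_def)
  qed (use \<open>d > 0\<close> eps in auto)
qed

lemma continuous_a_tilde: "continuous_on UNIV (a_tilde a T \<epsilon>)"
proof -
  have "continuous_on UNIV (\<lambda>x. max \<epsilon> (min T x))" by (intro continuous_intros)
  then have "continuous_on UNIV (\<lambda>x. a (max \<epsilon> (min T x)))"
    by (rule continuous_on_compose2[OF continuous_on_a]) (use eps in auto)
  moreover have "a_tilde a T \<epsilon> = (\<lambda>x. a (max \<epsilon> (min T x)))"
    using eps by (simp add: fun_eq_iff a_tilde_eq_clamp)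
  ultimately show ?thesis by simp
qed

lemma a_tilde_increment_le:
  assumes t: "t \<in> {0<..T}" and s: "\<bar>s\<bar> \<le> \<epsilon>"
  shows "\<bar>a_tilde a T \<epsilon> (t - s) - a_tilde a T \<epsilon> t\<bar> \<le> max (2*M) (C/\<kappa>) * min 1 (\<mu> \<epsilon> / \<nu> t)"
proof -
  define u where "u = max \<epsilon> (min T (t - s))"
  define v where "v = max \<epsilon> (min T t)"
  have uv: "u \<in> {\<epsilon>..T}" "v \<in> {\<epsilon>..T}" "t/2 \<le> min u v" "\<bar>u - v\<bar> \<le> \<epsilon>"
    using t s eps unfolding u_def v_def by (auto simp: min_def max_def)
  have "\<nu> t > 0" using nu_pos t by simp
  have "\<bar>a u\<bar> \<le> M" "\<bar>a v\<bar> \<le> M" using a_bounded uv eps by auto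
  then have "\<bar>a u - a v\<bar> \<le> 2*M" by linarith
  moreover have "\<bar>a u - a v\<bar> \<le> C/\<kappa> * (\<mu> \<epsilon> / \<nu> t)"
  proof -
    have "\<bar>a u - a v\<bar> \<le> C / \<nu> (min u v) * \<mu> \<bar>u - v\<bar>"
      using modulus_increment_le[OF modulus] uv eps by simp
    also have "\<dots> \<le> C / (\<kappa> * \<nu> t) * \<mu> \<epsilon>"
    proof (rule mult_mono)
      have "\<nu> (t/2) \<le> \<nu> (min u v)" using t uv by (intro mono_onD[OF nu_mono]) auto
      then have "\<kappa> * \<nu> t \<le> \<nu> (min u v)" using nu_half t by force
      then show "C / \<nu> (min u v) \<le> C / (\<kappa> * \<nu> t)"
        using C_pos kappa_pos nu_pos t by (simp add: frac_le)
      show "\<mu> \<bar>u - v\<bar> \<le> \<mu> \<epsilon>"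
        using strict_mono_on_leD[OF mu_mono] uv eps by simp
    qed (use C_pos kappa_pos \<open>\<nu> t > 0\<close> mu_nonneg uv eps in auto)
    also have "\<dots> = C/\<kappa> * (\<mu> \<epsilon> / \<nu> t)" by simp
    finally show ?thesis .
  qed
  moreover have "0 \<le> \<mu> \<epsilon> / \<nu> t" using mu_nonneg \<open>\<nu> t > 0\<close> eps by simp
  ultimately show ?thesis
    unfolding u_def v_def a_tilde_eq_clamp[OF order_trans[OF eps(2,3)]] by (rule le_max_mult_min)
qed

end

theorem proposition1:
  fixes C \<kappa> M :: real and \<rho> :: "real \<Rightarrow> real"
  assumes "C > 0" and "\<kappa> > 0" and "M \<ge> 0"
    and "smooth_real \<rho>"
    and "\<forall>s. \<bar>s\<bar> > 1 \<longrightarrow> \<rho> s = 0"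
    and "\<forall>s. \<rho> s \<ge> 0"
    and "(\<rho> has_integral 1) UNIV"
  shows "\<exists>C' C''. C' > 0 \<and> C'' > 0 \<and>
    (\<forall>(T::real) (\<tau>0::real) (\<mu>::real \<Rightarrow> real) (\<nu>::real \<Rightarrow> real) (a::real \<Rightarrow> real).
      T > 0 \<and> 0 < \<tau>0 \<and> \<tau>0 \<le> T
      \<and> continuous_on {0..\<tau>0} \<mu> \<and> concave_on {0..\<tau>0} \<mu> \<and> strict_mono_on {0..\<tau>0} \<mu>
      \<and> \<mu> 0 = 0 \<and> (\<forall>x\<in>{0..\<tau>0}. \<mu> x \<ge> 0)
      \<and> mono_on {0<..T} \<nu> \<and> continuous_on {0<..T} \<nu> \<and> (\<forall>t\<in>{0<..T}. \<nu> t > 0)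
      \<and> (\<forall>t\<in>{0<..T}. \<nu> (t/2) \<ge> \<kappa> * \<nu> t)
      \<and> (\<forall>t\<in>{0..T}. \<bar>a t\<bar> \<le> M)
      \<and> (\<forall>t \<tau>. 0 \<le> \<tau> \<and> \<tau> \<le> \<tau>0 \<and> t \<in> {0<..T} \<and> t + \<tau> \<in> {0<..T} \<longrightarrow>
              \<bar>a (t + \<tau>) - a t\<bar> \<le> C / \<nu> t * \<mu> \<tau>)
      \<longrightarrow>
      (\<forall>\<epsilon> t. 0 < \<epsilon> \<and> \<epsilon> \<le> \<tau>0 \<and> t \<in> {0<..T} \<longrightarrow>
         \<bar>a_moll \<rho> a T \<epsilon> t - a_tilde a T \<epsilon> t\<bar> \<le> C' * min 1 (\<mu> \<epsilon> / \<nu> t)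
         \<and> (\<exists>D. (a_moll \<rho> a T \<epsilon> has_real_derivative D) (at t)
                \<and> \<bar>D\<bar> \<le> C'' / \<epsilon> * min 1 (\<mu> \<epsilon> / \<nu> t))))"
proof -
  obtain \<rho>s where \<rho>s: "\<rho>s 0 = \<rho>" "\<forall>n x. (\<rho>s n has_real_derivative \<rho>s (Suc n) x) (at x)"
    using assms(4) unfolding smooth_real_def by blast
  interpret mollifier_kernel \<rho> "\<rho>s 1"
  proof
    show "(\<rho> has_real_derivative \<rho>s 1 x) (at x)" for x using \<rho>s by (metis One_nat_def)
    show "continuous_on UNIV (\<rho>s 1)"
      using \<rho>s(2) by (meson DERIV_isCont continuous_at_imp_continuous_on)
  qed (use assms(5-7) in auto)
  obtain B where "B > 0" and B: "\<And>s. \<bar>\<rho>s 1 s\<bar> \<le> B" using derivative_bounded by blast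
  define K where "K = max (2*M) (C/\<kappa>)"
  have "K > 0" using assms(1,2) by (simp add: K_def less_max_iff_disj)
  show ?thesis
  proof (rule exI[of _ K], rule exI[of _ "4 * B * K"], intro conjI allI impI, goal_cases)
    case (3 T \<tau>0 \<mu> \<nu> a \<epsilon> t)
    interpret weighted_modulus a \<mu> \<nu> C \<kappa> M T \<tau>0 \<epsilon>
      by unfold_locales (use 3 assms in blast)+
    have t: "t \<in> {0<..T}" using 3 by blast
    show ?case
      using mollify_dist_le[OF eps(1) continuous_a_tilde a_tilde_increment_le[OF t]]
      by (simp add: a_moll_eq_mollify K_def)
  next
    case (4 T \<tau>0 \<mu> \<nu> a \<epsilon> t)
    interpret weighted_modulus a \<mu> \<nu> C \<kappa> M T \<tau>0 \<epsilon>
      by unfold_locales (use 4 assms in blast)+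
    have t: "t \<in> {0<..T}" using 4 by blast
    show ?case
      using mollify_derivative_bound[OF eps(1) continuous_a_tilde B a_tilde_increment_le[OF t]]
      by (simp add: a_moll_eq_mollify K_def mult.assoc)
  qed (use \<open>K > 0\<close> \<open>B > 0\<close> in auto)
qed

end
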